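(* Let $W$ be the affine Weyl group of an irreducible reduced crystallographic root system of rank 2, with simple generators $s_0,s_1,s_2$. Let $H_{r_0},H_{r_1}$ be adjacent parallel hyperplanes ($H_{\alpha,c}$ and $H_{\alpha,c+1}$ for some root $\alpha$, $c\in\mathbb{Z}$) and suppose both the alcove $w\in W$ and the identity alcove lie in the strip between them. If $D_R(w)=\{0,i\}$ with $i\in\{1,2\}$, then $s_0s_i$ does not have order $4$.
   Context: $W$ is generated by the reflections in the lines $H_{\beta,k}=\{v:\langle v,\beta\rangle=k\}$ ($\beta$ a root, $k\in\mathbb{Z}$) in a Euclidean plane; its simple generators $s_0,s_1,s_2$ are the reflections in the walls of the fundamental alcove $A_0$, $s_0$ being the reflection in the wall not through the origin. Elements are identified with alcoves via $w\mapsto wA_0$. $\ell$ is Coxeter length; $D_R(w)=\{j:\ell(ws_j)<\ell(w)\}$. *)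

theory Defs
  imports "HOL-Analysis.Analysis"
begin

type_synonym pt = "real^2"

definition hyp :: "pt \<Rightarrow> real \<Rightarrow> pt set" where
  "hyp \<beta> k = {v. inner v \<beta> = k}"

definition refl :: "pt \<Rightarrow> real \<Rightarrow> pt \<Rightarrow> pt" where
  "refl \<beta> k v = v - ((2 * (inner v \<beta> - k)) / inner \<beta> \<beta>) *\<^sub>R \<beta>"

definition root_system :: "pt set \<Rightarrow> bool" where
  "root_system R \<longleftrightarrow> finite R \<and> 0 \<notin> R \<and> span R = UNIV
     \<and> (\<forall>\<alpha>\<in>R. \<forall>\<beta>\<in>R. refl \<alpha> 0 \<beta> \<in> R)
     \<and> (\<forall>\<alpha>\<in>R. \<forall>\<beta>\<in>R. 2 * inner \<alpha> \<beta> / inner \<alpha> \<alpha> \<in> \<int>)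
     \<and> (\<forall>\<alpha>\<in>R. \<forall>c::real. c *\<^sub>R \<alpha> \<in> R \<longrightarrow> c = 1 \<or> c = -1)"

definition irreducible_rs :: "pt set \<Rightarrow> bool" where
  "irreducible_rs R \<longleftrightarrow> \<not> (\<exists>R1 R2. R1 \<noteq> {} \<and> R2 \<noteq> {} \<and> R1 \<union> R2 = R \<and> R1 \<inter> R2 = {}
      \<and> (\<forall>a\<in>R1. \<forall>b\<in>R2. inner a b = 0))"

definition hyp_union :: "pt set \<Rightarrow> pt set" where
  "hyp_union R = (\<Union>\<beta>\<in>R. \<Union>k::int. hyp \<beta> (of_int k))"

definition alcove :: "pt set \<Rightarrow> pt set \<Rightarrow> bool" where
  "alcove R A \<longleftrightarrow> (\<exists>x. x \<notin> hyp_union R \<and> A = connected_component_set (- hyp_union R) x)"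

inductive_set affW :: "pt set \<Rightarrow> (pt \<Rightarrow> pt) set" for R where
  affW_id: "id \<in> affW R"
| affW_step: "\<beta> \<in> R \<Longrightarrow> w \<in> affW R \<Longrightarrow> refl \<beta> (of_int k) \<circ> w \<in> affW R"

text \<open>H_{beta,k} is a wall of the alcove A: it meets the closure of A in a segment
  (at least two distinct points) -- in the plane this means it supports an edge of A.\<close>
definition is_wall :: "pt set \<Rightarrow> pt set \<Rightarrow> pt \<Rightarrow> int \<Rightarrow> bool" where
  "is_wall R A \<beta> k \<longleftrightarrow> \<beta> \<in> R \<and>
     (\<exists>x y. x \<noteq> y \<and> x \<in> closure A \<inter> hyp \<beta> (of_int k) \<and> y \<in> closure A \<inter> hyp \<beta> (of_int k))"

definition simple_refls :: "pt set \<Rightarrow> pt set \<Rightarrow> (pt \<Rightarrow> pt) set" where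
  "simple_refls R A = {refl \<beta> (of_int k) | \<beta> k. is_wall R A \<beta> k}"

definition coxeter_length :: "('a \<Rightarrow> 'a) set \<Rightarrow> ('a \<Rightarrow> 'a) \<Rightarrow> nat" where
  "coxeter_length S w =
     (LEAST n. \<exists>ws. length ws = n \<and> set ws \<subseteq> S \<and> foldr (\<circ>) ws id = w)"

definition right_descents :: "('a \<Rightarrow> 'a) set \<Rightarrow> ('a \<Rightarrow> 'a) \<Rightarrow> ('a \<Rightarrow> 'a) set" where
  "right_descents S w = {s \<in> S. coxeter_length S (w \<circ> s) < coxeter_length S w}"

end

theory Submission
  imports Defs
begin

text \<open>Pick \<open>a \<in> A0\<close> and \<open>b\<close> with \<open>w b = a\<close>.  A right descent \<open>s\<close> of \<open>w\<close> means that \<open>w\<close> maps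
  the wall of \<open>s\<close> to a hyperplane separating \<open>w A0\<close> from \<open>A0\<close>; pulling back by \<open>w\<close>, both walls
  \<open>H\<^sub>\<beta>\<^sub>0\<^sub>,\<^sub>k\<^sub>0\<close> and \<open>H\<^sub>\<beta>\<^sub>i\<^sub>,\<^sub>0\<close> separate \<open>a\<close> from \<open>b\<close>.  If \<open>s\<^sub>0 s\<^sub>i\<close> had order four, these
  walls would meet at angle \<open>\<pi>/4\<close> in a vertex \<open>p\<close> of \<open>A0\<close>; then \<open>R\<close> is of type \<open>B\<^sub>2\<close> and \<open>p\<close>
  is a special point, \<open>\<langle>p, \<gamma>\<rangle> \<in> \<int>\<close> for every root \<open>\<gamma>\<close>.  So the hyperplane through \<open>p\<close>
  orthogonal to the root \<open>w\<^sup>-\<^sup>1\<alpha>\<close> belongs to the arrangement, and as \<open>A0\<close> is, near \<open>p\<close>, the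
  cone bounded by the two walls, it also separates \<open>a\<close> from \<open>b\<close>.  Its image under \<open>w\<close> is a
  hyperplane \<open>H\<^sub>\<alpha>\<^sub>,\<^sub>m\<close> separating \<open>w a\<close> from \<open>a\<close>, which is impossible since both points lie
  strictly between \<open>H\<^sub>\<alpha>\<^sub>,\<^sub>c\<close> and \<open>H\<^sub>\<alpha>\<^sub>,\<^sub>c\<^sub>+\<^sub>1\<close>.\<close>

section \<open>Hyperplanes and reflections\<close>

text \<open>A pair \<open>P = (b, k)\<close> stands for the equation \<open>\<langle>x, b\<rangle> = k\<close> of the hyperplane \<open>H\<^sub>b\<^sub>,\<^sub>k\<close>;
  proportional pairs describe the same hyperplane.\<close>

definition side :: "pt \<times> real \<Rightarrow> pt \<Rightarrow> real" where
  "side P x = inner x (fst P) - snd P"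

definition separates :: "pt \<times> real \<Rightarrow> pt \<Rightarrow> pt \<Rightarrow> bool" where
  "separates P x y \<longleftrightarrow> side P x * side P y < 0"

definition same_side :: "pt \<times> real \<Rightarrow> pt \<Rightarrow> pt \<Rightarrow> bool" where
  "same_side P x y \<longleftrightarrow> side P x * side P y > 0"

definition same_hyp :: "pt \<times> real \<Rightarrow> pt \<times> real \<Rightarrow> bool" where
  "same_hyp P Q \<longleftrightarrow> (\<exists>l. l \<noteq> 0 \<and> fst Q = l *\<^sub>R fst P \<and> snd Q = l * snd P)"

abbreviation hrefl :: "pt \<times> real \<Rightarrow> pt \<Rightarrow> pt" where
  "hrefl P \<equiv> refl (fst P) (snd P)"

lemma same_side_sym: "same_side P x y \<Longrightarrow> same_side P y x"
  unfolding same_side_def by (simp add: mult.commute)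

lemma same_side_trans: "same_side P x y \<Longrightarrow> same_side P y z \<Longrightarrow> same_side P x z"
  unfolding same_side_def by (auto simp: zero_less_mult_iff)

lemma separates_same_side_trans: "separates P x y \<Longrightarrow> same_side P y z \<Longrightarrow> separates P x z"
  unfolding separates_def same_side_def by (auto simp: zero_less_mult_iff mult_less_0_iff)

lemma same_side_self: "side P x \<noteq> 0 \<Longrightarrow> same_side P x x"
  unfolding same_side_def by (auto simp: zero_less_mult_iff linorder_neq_iff)

lemma side_convex_comb: "side P ((1 - t) *\<^sub>R x + t *\<^sub>R y) = (1 - t) * side P x + t * side P y"
  by (simp add: side_def inner_add_left algebra_simps)

lemma same_hyp_self: "same_hyp P P"
  unfolding same_hyp_def by (rule exI[of _ 1]) simp

lemma same_hyp_sym: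
  assumes "same_hyp P Q" shows "same_hyp Q P"
proof -
  obtain l where "l \<noteq> 0" "fst Q = l *\<^sub>R fst P" "snd Q = l * snd P"
    using assms same_hyp_def by blast
  then show ?thesis unfolding same_hyp_def by (intro exI[of _ "1 / l"]) simp
qed

lemma same_hyp_trans:
  assumes "same_hyp P Q" "same_hyp Q S" shows "same_hyp P S"
proof -
  obtain l where "l \<noteq> 0" "fst Q = l *\<^sub>R fst P" "snd Q = l * snd P"
    using assms(1) same_hyp_def by blast
  moreover obtain m where "m \<noteq> 0" "fst S = m *\<^sub>R fst Q" "snd S = m * snd Q"
    using assms(2) same_hyp_def by blast
  ultimately show ?thesis unfolding same_hyp_def by (intro exI[of _ "m * l"]) simp
qed

lemma side_same_hyp: "same_hyp P Q \<Longrightarrow> \<exists>l. l \<noteq> 0 \<and> (\<forall>x. side Q x = l * side P x)"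
  unfolding same_hyp_def side_def by (auto simp: right_diff_distrib)

lemma separates_same_hyp: "same_hyp P Q \<Longrightarrow> separates Q x y \<longleftrightarrow> separates P x y"
  unfolding separates_def
  by (auto dest!: side_same_hyp simp: mult_less_0_iff zero_less_mult_iff linorder_neq_iff)

lemma refl_scale:
  assumes "l \<noteq> 0" shows "refl (l *\<^sub>R b) (l * k) = refl b k"
proof
  fix x
  have "2 * (inner x (l *\<^sub>R b) - l * k) / inner (l *\<^sub>R b) (l *\<^sub>R b) * l
      = 2 * (inner x b - k) / inner b b"
    using assms by (cases "b = 0") (simp_all add: field_simps)
  then show "refl (l *\<^sub>R b) (l * k) x = refl b k x"
    unfolding refl_def scaleR_scaleR by simp
qed

lemma hrefl_same_hyp: "same_hyp P Q \<Longrightarrow> hrefl P = hrefl Q"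
  unfolding same_hyp_def by (auto simp: refl_scale)

lemma refl_0: "refl b k 0 = (2 * k / inner b b) *\<^sub>R b"
  by (simp add: refl_def)

lemma refl_diff: "refl b k x - refl b k y = refl b 0 (x - y)"
  by (simp add: refl_def inner_diff_left algebra_simps diff_divide_distrib scaleR_diff_left)

lemma orthogonal_transformation_refl:
  assumes "b \<noteq> 0" shows "orthogonal_transformation (refl b 0)"
proof -
  have "linear (refl b 0)"
    by (rule linearI) (simp_all add: refl_def inner_add_left algebra_simps add_divide_distrib)
  moreover have "inner (refl b 0 v) (refl b 0 w) = inner v w" for v w
    using assms by (simp add: refl_def inner_diff_left inner_diff_right field_simps inner_commute)
  ultimately show ?thesis by (simp add: orthogonal_transformation_def)
qed

lemma side_refl: "b \<noteq> 0 \<Longrightarrow> side (b, k) (refl b k x) = - side (b, k) x"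
  by (simp add: side_def refl_def inner_diff_left)

lemma refl_refl:
  assumes "b \<noteq> 0" shows "refl b k (refl b k x) = x"
proof -
  define c where "c = 2 * (inner x b - k) / inner b b"
  have "2 * (inner (x - c *\<^sub>R b) b - k) / inner b b = - c"
    using assms unfolding c_def by (simp add: inner_diff_left field_simps)
  then show ?thesis unfolding refl_def c_def[symmetric] by simp
qed

lemma refl_comp_self: "b \<noteq> 0 \<Longrightarrow> refl b k \<circ> refl b k = id"
  by (rule ext) (simp add: refl_refl)

lemma refl_fixed_iff: "b \<noteq> 0 \<Longrightarrow> refl b k x = x \<longleftrightarrow> inner x b = k"
  by (simp add: refl_def)

lemma not_separates_strip:
  fixes c :: int
  assumes "m \<in> \<int>" and "x \<in> {v. of_int c < inner v \<alpha> \<and> inner v \<alpha> < of_int c + 1}"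
    and "y \<in> {v. of_int c < inner v \<alpha> \<and> inner v \<alpha> < of_int c + 1}"
  shows "\<not> separates (\<alpha>, m) x y"
proof
  assume "separates (\<alpha>, m) x y"
  then have "of_int c < m \<and> m < of_int c + 1"
    using assms(2,3) unfolding separates_def side_def mult_less_0_iff by auto
  moreover obtain i where "m = of_int i" using assms(1) Ints_cases by blast
  ultimately have "c < i \<and> i < c + 1" by linarith
  then show False by linarith
qed

section \<open>Symmetries of the hyperplane arrangement\<close>

lemma root_nonzero: "root_system R \<Longrightarrow> b \<in> R \<Longrightarrow> b \<noteq> 0"
  unfolding root_system_def by auto

definition arr_hyp :: "pt set \<Rightarrow> pt \<times> real \<Rightarrow> bool" where
  "arr_hyp R P \<longleftrightarrow> fst P \<in> R \<and> snd P \<in> \<int>"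

text \<open>The affine isometries permuting the hyperplanes \<open>H\<^sub>b\<^sub>,\<^sub>k\<close> (\<open>b \<in> R\<close>, \<open>k \<in> \<int>\<close>);
  \<open>hyp_image g P\<close> is the equation of the image under \<open>g\<close> of the hyperplane \<open>P\<close>.\<close>

definition arr_sym :: "pt set \<Rightarrow> (pt \<Rightarrow> pt) \<Rightarrow> bool" where
  "arr_sym R g \<longleftrightarrow> orthogonal_transformation (\<lambda>x. g x - g 0) \<and>
     (\<forall>b\<in>R. g b - g 0 \<in> R \<and> inner (g 0) (g b - g 0) \<in> \<int>)"

definition hyp_image :: "(pt \<Rightarrow> pt) \<Rightarrow> pt \<times> real \<Rightarrow> pt \<times> real" where
  "hyp_image g P = (g (fst P) - g 0, snd P + inner (g 0) (g (fst P) - g 0))"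

lemma arr_sym_orthogonal: "arr_sym R g \<Longrightarrow> orthogonal_transformation (\<lambda>x. g x - g 0)"
  by (simp add: arr_sym_def)

lemma arr_sym_inner:
  assumes "arr_sym R g" shows "inner (g x - g 0) (g y - g 0) = inner x y"
  using arr_sym_orthogonal[OF assms] unfolding orthogonal_transformation_def by blast

lemma arr_sym_linear: "arr_sym R g \<Longrightarrow> linear (\<lambda>x. g x - g 0)"
  using arr_sym_orthogonal orthogonal_transformation by blast

lemma arr_sym_diff:
  assumes "arr_sym R g" shows "g x - g y = g (x - y) - g 0"
  using linear_diff[OF arr_sym_linear[OF assms], of x y] by simp

lemma arr_sym_scale:
  assumes "arr_sym R g" shows "g (r *\<^sub>R x) - g 0 = r *\<^sub>R (g x - g 0)"
  using linear_scale[OF arr_sym_linear[OF assms], of r x] by simp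

lemma arr_sym_id: "arr_sym R id"
  by (simp add: arr_sym_def orthogonal_transformation_id[unfolded id_def])

lemma arr_sym_refl:
  assumes R: "root_system R" and b: "b \<in> R" and k: "k \<in> \<int>"
  shows "arr_sym R (refl b k)"
proof -
  have bz: "b \<noteq> 0" using root_nonzero[OF R b] .
  have lin: "(\<lambda>x. refl b k x - refl b k 0) = refl b 0"
    using refl_diff[of b k _ 0] by simp
  have "refl b 0 c \<in> R \<and> inner (refl b k 0) (refl b 0 c) \<in> \<int>" if c: "c \<in> R" for c
  proof
    show "refl b 0 c \<in> R" using R b c unfolding root_system_def by auto
    have "2 * inner b c / inner b b \<in> \<int>" using R b c unfolding root_system_def by auto
    moreover have "inner (refl b k 0) (refl b 0 c) = - k * (2 * inner b c / inner b b)"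
      using bz by (simp add: refl_def inner_diff_right field_simps inner_commute)
    ultimately show "inner (refl b k 0) (refl b 0 c) \<in> \<int>"
      using k by (metis Ints_minus Ints_mult)
  qed
  then show ?thesis
    unfolding arr_sym_def lin using orthogonal_transformation_refl[OF bz] refl_diff[of b k _ 0]
    by simp
qed

lemma arr_sym_comp:
  assumes f: "arr_sym R f" and g: "arr_sym R g" shows "arr_sym R (f \<circ> g)"
proof -
  have e: "f (g x) - f (g 0) = f (g x - g 0) - f 0" for x
    by (rule arr_sym_diff[OF f])
  have "orthogonal_transformation (\<lambda>x. f (g x) - f (g 0))"
    using orthogonal_transformation_compose[OF arr_sym_orthogonal[OF f] arr_sym_orthogonal[OF g]]
    by (simp add: e o_def)
  moreover have "f (g b) - f (g 0) \<in> R \<and> inner (f (g 0)) (f (g b) - f (g 0)) \<in> \<int>"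
    if b: "b \<in> R" for b
  proof
    have gb: "g b - g 0 \<in> R" using g b by (simp add: arr_sym_def)
    then show "f (g b) - f (g 0) \<in> R" using f e by (simp add: arr_sym_def)
    have "inner (f (g 0)) (f (g b) - f (g 0))
        = inner (f (g 0) - f 0) (f (g b - g 0) - f 0) + inner (f 0) (f (g b - g 0) - f 0)"
      by (simp add: e inner_diff_left)
    also have "\<dots> = inner (g 0) (g b - g 0) + inner (f 0) (f (g b - g 0) - f 0)"
      using arr_sym_inner[OF f] by simp
    finally show "inner (f (g 0)) (f (g b) - f (g 0)) \<in> \<int>"
      using g b gb f by (simp add: arr_sym_def)
  qed
  ultimately show ?thesis by (simp add: arr_sym_def)
qed

lemma arr_sym_affW:
  assumes "root_system R" and "w \<in> affW R" shows "arr_sym R w"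
  using assms(2)
proof induction
  case affW_id
  show ?case by (rule arr_sym_id)
next
  case (affW_step \<beta> w k)
  then show ?case by (intro arr_sym_comp arr_sym_refl[OF assms(1)]) simp_all
qed

lemma arr_sym_surj:
  assumes "arr_sym R g" shows "surj g"
proof -
  have L: "surj (\<lambda>x. g x - g 0)" by (rule orthogonal_transformation_surj[OF arr_sym_orthogonal[OF assms]])
  have "\<exists>y. z = g y" for z
  proof -
    obtain y where "z - g 0 = g y - g 0" using surjD[OF L] by blast
    then show ?thesis by auto
  qed
  then show ?thesis unfolding surj_def by blast
qed

lemma side_hyp_image:
  assumes "arr_sym R g" shows "side (hyp_image g P) (g x) = side P x"
proof -
  have "inner (g x) (g (fst P) - g 0) - inner (g 0) (g (fst P) - g 0)
      = inner (g x - g 0) (g (fst P) - g 0)"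
    by (simp add: inner_diff_left)
  then show ?thesis using arr_sym_inner[OF assms] by (simp add: side_def hyp_image_def)
qed

lemma separates_hyp_image:
  "arr_sym R g \<Longrightarrow> separates (hyp_image g P) (g x) (g y) \<longleftrightarrow> separates P x y"
  by (simp add: separates_def side_hyp_image)

lemma same_side_hyp_image:
  "arr_sym R g \<Longrightarrow> same_side (hyp_image g P) (g x) (g y) \<longleftrightarrow> same_side P x y"
  by (simp add: same_side_def side_hyp_image)

lemma hyp_image_id: "hyp_image id P = P"
  by (simp add: hyp_image_def)

lemma hyp_image_comp:
  assumes f: "arr_sym R f" and g: "arr_sym R g"
  shows "hyp_image (f \<circ> g) P = hyp_image f (hyp_image g P)"
proof -
  have e: "f (g x) - f (g 0) = f (g x - g 0) - f 0" for x
    by (rule arr_sym_diff[OF f])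
  have "inner (f (g 0)) (f (g (fst P) - g 0) - f 0)
      = inner (f (g 0) - f 0) (f (g (fst P) - g 0) - f 0) + inner (f 0) (f (g (fst P) - g 0) - f 0)"
    by (simp add: inner_diff_left)
  also have "\<dots> = inner (g 0) (g (fst P) - g 0) + inner (f 0) (f (g (fst P) - g 0) - f 0)"
    using arr_sym_inner[OF f] by simp
  finally show ?thesis using e by (simp add: hyp_image_def)
qed

lemma hrefl_conj:
  assumes g: "arr_sym R g" and b: "fst P \<noteq> 0"
  shows "g \<circ> hrefl P = hrefl (hyp_image g P) \<circ> g"
proof
  fix x
  obtain b k where P: "P = (b, k)" by fastforce
  let ?L = "\<lambda>x. g x - g 0"
  define c where "c = 2 * (inner x b - k) / inner b b"
  have "g (refl b k x) = g (x - c *\<^sub>R b)" by (simp add: refl_def c_def)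
  also have "\<dots> = g x - (g (c *\<^sub>R b) - g 0)"
    using arr_sym_diff[OF g, of x "c *\<^sub>R b"] by (simp add: algebra_simps)
  also have "\<dots> = g x - c *\<^sub>R ?L b" by (simp only: arr_sym_scale[OF g])
  also have "\<dots> = refl (?L b) (k + inner (g 0) (?L b)) (g x)"
  proof -
    have "inner (g x) (?L b) - (k + inner (g 0) (?L b)) = inner x b - k"
      using arr_sym_inner[OF g, of x b] by (simp add: inner_diff_left)
    then show ?thesis
      using arr_sym_inner[OF g, of b b] by (simp add: refl_def c_def)
  qed
  finally show "(g \<circ> hrefl P) x = (hrefl (hyp_image g P) \<circ> g) x"
    by (simp add: P hyp_image_def)
qed

lemma same_hyp_hyp_image:
  assumes g: "arr_sym R g" and "same_hyp P Q"
  shows "same_hyp (hyp_image g P) (hyp_image g Q)"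
proof -
  obtain l where l: "l \<noteq> 0" "fst Q = l *\<^sub>R fst P" "snd Q = l * snd P"
    using assms(2) same_hyp_def by blast
  then show ?thesis unfolding same_hyp_def hyp_image_def
    by (intro exI[of _ l]) (simp add: arr_sym_scale[OF g] distrib_left)
qed

lemma same_hyp_hyp_image_iff:
  assumes g: "arr_sym R g"
  shows "same_hyp (hyp_image g P) (hyp_image g Q) \<longleftrightarrow> same_hyp P Q"
proof
  assume "same_hyp (hyp_image g P) (hyp_image g Q)"
  then obtain l where l: "l \<noteq> 0" "fst (hyp_image g Q) = l *\<^sub>R fst (hyp_image g P)"
    "snd (hyp_image g Q) = l * snd (hyp_image g P)"
    using same_hyp_def by blast
  have "g (fst Q - l *\<^sub>R fst P) - g 0 = (g (fst Q) - g 0) - (g (l *\<^sub>R fst P) - g 0)"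
    using arr_sym_diff[OF g, of "fst Q" "l *\<^sub>R fst P"] by simp
  also have "\<dots> = (g (fst Q) - g 0) - l *\<^sub>R (g (fst P) - g 0)"
    by (simp only: arr_sym_scale[OF g])
  also have "\<dots> = 0" using l(2) by (simp add: hyp_image_def)
  finally have "fst Q = l *\<^sub>R fst P"
    using arr_sym_inner[OF g, of "fst Q - l *\<^sub>R fst P" "fst Q - l *\<^sub>R fst P"] by simp
  moreover from this have "snd Q = l * snd P"
    using l(3) by (simp add: hyp_image_def arr_sym_scale[OF g] algebra_simps)
  ultimately show "same_hyp P Q" using l(1) unfolding same_hyp_def by blast
qed (rule same_hyp_hyp_image[OF g])

lemma same_hyp_hyp_image_refl:
  assumes "b \<noteq> 0" shows "same_hyp (hyp_image (refl b k) (b, k)) (b, k)"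
proof -
  have "refl b 0 b = - b" using assms by (simp add: refl_def scaleR_2)
  then have "hyp_image (refl b k) (b, k) = (- b, - k)"
    using refl_diff[of b k b 0] assms by (simp add: hyp_image_def refl_0)
  then show ?thesis unfolding same_hyp_def by (intro exI[of _ "-1"]) simp
qed

lemma arr_sym_roots_surj:
  assumes g: "arr_sym R g" and "finite R" and "c \<in> R"
  shows "\<exists>d\<in>R. g d - g 0 = c"
proof -
  let ?L = "\<lambda>x. g x - g 0"
  have "?L ` R \<subseteq> R" using g unfolding arr_sym_def by blast
  moreover have "inj_on ?L R"
    using orthogonal_transformation_inj[OF arr_sym_orthogonal[OF g]] inj_on_subset by blast
  ultimately have "?L ` R = R" using endo_inj_surj[OF \<open>finite R\<close>] by blast
  then have "c \<in> ?L ` R" using \<open>c \<in> R\<close> by simp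
  then show ?thesis by blast
qed

lemma arr_hyp_image: "arr_sym R g \<Longrightarrow> arr_hyp R P \<Longrightarrow> arr_hyp R (hyp_image g P)"
  unfolding arr_sym_def arr_hyp_def hyp_image_def by simp

lemma arr_hyp_preimage:
  assumes g: "arr_sym R g" and "finite R" and P: "arr_hyp R P"
  shows "\<exists>Q. arr_hyp R Q \<and> hyp_image g Q = P"
proof -
  obtain d where d: "d \<in> R" "g d - g 0 = fst P"
    using arr_sym_roots_surj[OF g \<open>finite R\<close>] P arr_hyp_def by blast
  have "inner (g 0) (fst P) \<in> \<int>" using g d unfolding arr_sym_def by auto
  then have "snd P - inner (g 0) (fst P) \<in> \<int>" using P by (simp add: arr_hyp_def Ints_diff)
  then show ?thesis using d
    by (intro exI[of _ "(d, snd P - inner (g 0) (fst P))"]) (simp add: arr_hyp_def hyp_image_def)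
qed

lemma not_separates_strip_preimage:
  fixes c :: int
  assumes w: "arr_sym R w" and P: "arr_hyp R P" and \<alpha>: "w (fst P) - w 0 = \<alpha>" and b: "w b = a"
    and "a \<in> {v. of_int c < inner v \<alpha> \<and> inner v \<alpha> < of_int c + 1}"
    and "w a \<in> {v. of_int c < inner v \<alpha> \<and> inner v \<alpha> < of_int c + 1}"
  shows "\<not> separates P a b"
proof -
  have "hyp_image w P = (\<alpha>, snd (hyp_image w P))" using \<alpha> by (simp add: hyp_image_def)
  moreover have "snd (hyp_image w P) \<in> \<int>" using arr_hyp_image[OF w P] by (simp add: arr_hyp_def)
  then have "\<not> separates (\<alpha>, snd (hyp_image w P)) (w a) a" using not_separates_strip assms(5,6) by blast
  ultimately show ?thesis using separates_hyp_image[OF w, of P a b] b by simp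
qed

section \<open>Plane geometry\<close>

lemma inner_pt: "inner (x::pt) y = x$1 * y$1 + x$2 * y$2"
  by (simp add: inner_vec_def sum_2)

lemma pt_eq_iff: "(x::pt) = y \<longleftrightarrow> x$1 = y$1 \<and> x$2 = y$2"
  by (simp add: vec_eq_iff forall_2)

definition rot :: "pt \<Rightarrow> pt" where
  "rot d = (\<chi> i. if i = 1 then - d$2 else d$1)"

definition det2 :: "pt \<Rightarrow> pt \<Rightarrow> real" where
  "det2 a b = a$1 * b$2 - a$2 * b$1"

lemma rot_component [simp]: "rot d $ 1 = - d$2" "rot d $ 2 = d$1"
  by (simp_all add: rot_def)

lemma rot_nonzero: "d \<noteq> 0 \<Longrightarrow> rot d \<noteq> 0"
  by (simp add: pt_eq_iff) blast

lemma inner_rot_self: "inner (rot d) d = 0"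
  by (simp add: inner_pt)

lemma inner_rot: "inner (rot a) b = det2 a b"
  by (simp add: inner_pt det2_def)

lemma orthogonal_imp_multiple_rot:
  assumes "d \<noteq> 0" "inner b d = 0" shows "\<exists>m. b = m *\<^sub>R rot d"
proof (cases "d$1 = 0")
  case True
  then have "d$2 \<noteq> 0" using assms(1) by (simp add: pt_eq_iff)
  then show ?thesis using assms True
    by (intro exI[of _ "- b$1 / d$2"]) (auto simp: pt_eq_iff inner_pt field_simps)
next
  case False
  then show ?thesis using assms
    by (intro exI[of _ "b$2 / d$1"]) (auto simp: pt_eq_iff inner_pt field_simps)
qed

lemma det2_eq_0_imp_multiple:
  assumes "det2 a b = 0" "a \<noteq> 0" shows "\<exists>l. b = l *\<^sub>R a"
proof (cases "a$1 = 0")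
  case True
  then have "a$2 \<noteq> 0" using assms(2) by (simp add: pt_eq_iff)
  then show ?thesis using assms True
    by (intro exI[of _ "b$2 / a$2"]) (auto simp: pt_eq_iff det2_def field_simps)
next
  case False
  then show ?thesis using assms
    by (intro exI[of _ "b$1 / a$1"]) (auto simp: pt_eq_iff det2_def field_simps)
qed

lemma det2_nonzero_imp_nonzero: "det2 a b \<noteq> 0 \<Longrightarrow> a \<noteq> 0 \<and> b \<noteq> 0"
  by (auto simp: det2_def)

lemma det2_commute_nonzero: "det2 a b \<noteq> 0 \<Longrightarrow> det2 b a \<noteq> 0"
  unfolding det2_def by (simp add: mult.commute)

lemma lagrange_identity2: "inner a a * inner b b - (inner a b)^2 = (det2 a b)^2"
  by (simp add: inner_pt det2_def power2_eq_square algebra_simps)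

lemma det2_nonzero_if_angle:
  assumes "a \<noteq> 0" "b \<noteq> 0" "2 * (inner a b)^2 = inner a a * inner b b"
  shows "det2 a b \<noteq> 0"
proof
  assume "det2 a b = 0"
  then have "(inner a b)^2 = inner a a * inner b b" using lagrange_identity2[of a b] by simp
  then show False using assms by simp
qed

lemma decompose_det2:
  assumes "det2 a b \<noteq> 0"
  shows "x = (det2 x b / det2 a b) *\<^sub>R a + (det2 a x / det2 a b) *\<^sub>R b"
proof -
  have "det2 x b * a$1 + det2 a x * b$1 = x$1 * det2 a b"
    "det2 x b * a$2 + det2 a x * b$2 = x$2 * det2 a b"
    by (simp_all add: det2_def algebra_simps)
  then have "(det2 x b / det2 a b) * a$1 + (det2 a x / det2 a b) * b$1 = x$1"
    "(det2 x b / det2 a b) * a$2 + (det2 a x / det2 a b) * b$2 = x$2"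
    using assms by (simp_all add: field_simps)
  then show ?thesis by (simp add: pt_eq_iff)
qed

lemma orthogonal_to_basis_imp_zero:
  assumes "det2 a b \<noteq> 0" "inner v a = 0" "inner v b = 0" shows "v = 0"
proof -
  have "inner v v = 0"
    by (subst (2) decompose_det2[OF assms(1)]) (simp add: inner_add_right assms(2,3))
  then show ?thesis by simp
qed

lemma hyperplanes_meet:
  assumes "det2 a b \<noteq> 0" shows "\<exists>p. inner p a = k \<and> inner p b = m"
proof
  have "inner (rot b) a = - det2 a b" "inner (rot a) b = det2 a b"
    by (simp_all add: inner_rot det2_def)
  then show "inner ((1 / det2 a b) *\<^sub>R (m *\<^sub>R rot a - k *\<^sub>R rot b)) a = k
      \<and> inner ((1 / det2 a b) *\<^sub>R (m *\<^sub>R rot a - k *\<^sub>R rot b)) b = m"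
    using assms by (simp add: inner_diff_left inner_rot_self)
qed

lemma same_hyp_if_common_points:
  assumes "z1 \<noteq> z2" "side P z1 = 0" "side P z2 = 0" "side Q z1 = 0" "side Q z2 = 0"
    and "fst P \<noteq> 0" "fst Q \<noteq> 0"
  shows "same_hyp P Q"
proof -
  let ?d = "z2 - z1"
  have d: "?d \<noteq> 0" using assms by simp
  have "inner (fst P) ?d = 0" "inner (fst Q) ?d = 0" using assms(2-5)
    by (auto simp: side_def inner_diff_right inner_commute)
  then obtain mp mq where mp: "fst P = mp *\<^sub>R rot ?d" and mq: "fst Q = mq *\<^sub>R rot ?d"
    using orthogonal_imp_multiple_rot[OF d] by metis
  have "mp \<noteq> 0" "mq \<noteq> 0" using mp mq assms(6,7) by auto
  moreover have "fst Q = (mq / mp) *\<^sub>R fst P" using mp mq \<open>mp \<noteq> 0\<close> by simp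
  moreover have "snd Q = (mq / mp) * snd P"
    using assms(2,4) \<open>fst Q = (mq / mp) *\<^sub>R fst P\<close> by (simp add: side_def)
  ultimately show ?thesis unfolding same_hyp_def by (intro exI[of _ "mq / mp"]) simp
qed

lemma same_hyp_if_hrefl_eq:
  assumes P: "fst P \<noteq> 0" and Q: "fst Q \<noteq> 0" and e: "hrefl P = hrefl Q"
  shows "same_hyp P Q"
proof -
  let ?z1 = "(snd P / inner (fst P) (fst P)) *\<^sub>R fst P"
  let ?z2 = "?z1 + rot (fst P)"
  have "inner ?z1 (fst P) = snd P" "inner ?z2 (fst P) = snd P"
    using P by (simp_all add: inner_add_left inner_rot_self)
  then have "hrefl Q ?z1 = ?z1" "hrefl Q ?z2 = ?z2"
    using refl_fixed_iff[OF P] e by metis+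
  then have "inner ?z1 (fst Q) = snd Q" "inner ?z2 (fst Q) = snd Q"
    using refl_fixed_iff[OF Q] by blast+
  moreover have "?z1 \<noteq> ?z2" using rot_nonzero[OF P] by simp
  ultimately show ?thesis
    using same_hyp_if_common_points[of ?z1 ?z2 P Q] P Q \<open>inner ?z1 (fst P) = snd P\<close>
      \<open>inner ?z2 (fst P) = snd P\<close> by (simp add: side_def)
qed

lemma roots_parallel:
  assumes "root_system R" "a \<in> R" "b \<in> R" "b = l *\<^sub>R a" shows "l = 1 \<or> l = -1"
  using assms unfolding root_system_def by blast

lemma roots_orthogonal_to_same:
  assumes R: "root_system R" and g: "g \<in> R" and d: "d \<in> R" and a: "a \<noteq> 0"
    and "inner g a = 0" "inner d a = 0"
  shows "g = d \<or> g = - d"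
proof -
  obtain m1 m2 where m1: "g = m1 *\<^sub>R rot a" and m2: "d = m2 *\<^sub>R rot a"
    using orthogonal_imp_multiple_rot[OF a] assms(5,6) by metis
  have "m2 \<noteq> 0" using m2 root_nonzero[OF R d] by auto
  then have "g = (m1 / m2) *\<^sub>R d" using m1 m2 by simp
  moreover from this have "m1 / m2 = 1 \<or> m1 / m2 = -1" by (rule roots_parallel[OF R d g])
  ultimately show ?thesis by auto
qed

section \<open>Alcoves\<close>

lemma side_nonzero_alcove:
  assumes A: "alcove R A" and x: "x \<in> A" and P: "arr_hyp R P"
  shows "side P x \<noteq> 0"
proof
  assume "side P x = 0"
  moreover obtain k :: int where "snd P = of_int k" using P arr_hyp_def Ints_cases by metis
  ultimately have "x \<in> hyp (fst P) (of_int k)" by (simp add: hyp_def side_def)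
  then have "x \<in> hyp_union R" using P unfolding hyp_union_def arr_hyp_def by blast
  moreover have "A \<subseteq> - hyp_union R"
    using A connected_component_subset unfolding alcove_def by blast
  ultimately show False using x by blast
qed

lemma alcove_nonempty: "alcove R A \<Longrightarrow> \<exists>a. a \<in> A"
  unfolding alcove_def by (auto intro: connected_component_refl)

lemma same_side_alcove:
  assumes A: "alcove R A" and x: "x \<in> A" and y: "y \<in> A" and P: "arr_hyp R P"
  shows "same_side P x y"
proof (rule ccontr)
  assume "\<not> same_side P x y"
  then have "side P x * side P y \<le> 0" by (simp add: same_side_def)
  then obtain u v where uv: "u \<in> A" "v \<in> A" "inner (fst P) u \<le> snd P" "snd P \<le> inner (fst P) v"
    using x y unfolding mult_le_0_iff side_def by (auto simp: inner_commute)
  have "connected A" using A connected_connected_component unfolding alcove_def by blast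
  then obtain z where "z \<in> A" "inner (fst P) z = snd P"
    using connected_ivt_hyperplane[OF _ uv] by blast
  then show False using side_nonzero_alcove[OF A _ P] by (simp add: side_def inner_commute)
qed

lemma side_segment_nonzero:
  assumes "same_side P y z" "0 \<le> t" "t \<le> 1"
  shows "side P ((1 - t) *\<^sub>R y + t *\<^sub>R z) \<noteq> 0"
proof -
  note e = side_convex_comb[of P t y z]
  from assms(1) consider "side P y > 0" "side P z > 0" | "side P y < 0" "side P z < 0"
    unfolding same_side_def zero_less_mult_iff by blast
  then show ?thesis
  proof cases
    case 1
    then have "(1 - t) * (- side P y) + t * (- side P z) < 0"
      by (intro convex_bound_lt) (use assms in auto)
    then show ?thesis unfolding e by simp
  next
    case 2
    then have "(1 - t) * side P y + t * side P z < 0"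
      by (intro convex_bound_lt) (use assms in auto)
    then show ?thesis unfolding e by simp
  qed
qed

lemma convex_alcove:
  assumes A: "alcove R A" shows "convex A"
  unfolding convex_contains_segment
proof (intro ballI)
  fix y z assume y: "y \<in> A" and z: "z \<in> A"
  have "closed_segment y z \<subseteq> - hyp_union R"
  proof
    fix u assume "u \<in> closed_segment y z"
    then obtain t where t: "0 \<le> t" "t \<le> 1" "u = (1 - t) *\<^sub>R y + t *\<^sub>R z"
      unfolding closed_segment_def by blast
    show "u \<in> - hyp_union R"
    proof
      assume "u \<in> hyp_union R"
      then obtain b and k :: int where bk: "b \<in> R" "u \<in> hyp b (of_int k)"
        unfolding hyp_union_def by blast
      then have "arr_hyp R (b, of_int k)" "side (b, of_int k) u = 0"
        by (simp_all add: arr_hyp_def hyp_def side_def)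
      then show False
        using side_segment_nonzero[OF same_side_alcove[OF A y z] t(1,2)] t(3) by simp
    qed
  qed
  then have "closed_segment y z \<subseteq> connected_component_set (- hyp_union R) y"
    by (intro connected_component_maximal) auto
  moreover obtain x where "A = connected_component_set (- hyp_union R) x"
    using A alcove_def by blast
  ultimately show "closed_segment y z \<subseteq> A"
    using y connected_component_eq by blast
qed

lemma side_closure_alcove:
  assumes A: "alcove R A" and x: "x \<in> A" and P: "arr_hyp R P" and z: "z \<in> closure A"
  shows "side P z * side P x \<ge> 0"
proof -
  let ?S = "{v. inner (side P x *\<^sub>R fst P) v \<ge> snd P * side P x}"
  have e: "side P v * side P x = inner (side P x *\<^sub>R fst P) v - snd P * side P x" for v
    by (simp add: side_def algebra_simps inner_commute)
  have "A \<subseteq> ?S"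
  proof
    fix v assume "v \<in> A"
    then have "side P v * side P x > 0" using same_side_alcove[OF A _ x P] same_side_def by blast
    then show "v \<in> ?S" using e[of v] by simp
  qed
  then have "closure A \<subseteq> ?S" by (rule closure_minimal) (rule closed_halfspace_ge)
  then show ?thesis using z e[of z] by auto
qed

lemma same_side_closure_alcove:
  assumes "alcove R A" "x \<in> A" "arr_hyp R P" "z \<in> closure A" "side P z \<noteq> 0"
  shows "same_side P z x"
  using side_closure_alcove[OF assms(1-4)] side_nonzero_alcove[OF assms(1-3)] assms(5)
  unfolding same_side_def by (simp add: order_le_less)

lemma finite_segment_hits:
  assumes "side W x = 0" "side W y = 0" "fst W \<noteq> 0" "fst P \<noteq> 0" "\<not> same_hyp W P"
  shows "finite {u \<in> closed_segment x y. side P u = 0}"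
proof -
  have on_W: "side W u = 0" if u: "u \<in> closed_segment x y" for u
  proof -
    obtain t where "u = (1 - t) *\<^sub>R x + t *\<^sub>R y" using u unfolding closed_segment_def by blast
    then show ?thesis using assms(1,2) side_convex_comb[of W] by simp
  qed
  have uniq: "u = v" if uv: "u \<in> closed_segment x y" "v \<in> closed_segment x y"
      "side P u = 0" "side P v = 0" for u v
  proof (rule ccontr)
    assume "u \<noteq> v"
    then have "same_hyp W P"
      using same_hyp_if_common_points[OF _ on_W[OF uv(1)] on_W[OF uv(2)] uv(3,4) assms(3,4)] by blast
    then show False using assms(5) by blast
  qed
  show ?thesis
  proof (cases "{u \<in> closed_segment x y. side P u = 0} = {}")
    case False
    then obtain u0 where "u0 \<in> closed_segment x y" "side P u0 = 0" by blast
    then have "{u \<in> closed_segment x y. side P u = 0} \<subseteq> {u0}" using uniq by blast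
    then show ?thesis using finite_subset by blast
  next
    case True
    show ?thesis unfolding True by simp
  qed
qed

text \<open>Each wall contains a point of the closed alcove lying on no other hyperplane of the
  arrangement: a wall segment is uncountable, while every other hyperplane meets it at most once.\<close>

lemma wall_generic_point:
  assumes R: "root_system R" and A: "alcove R A" and W: "is_wall R A b k"
  shows "\<exists>z\<in>closure A. side (b, of_int k) z = 0 \<and>
     (\<forall>P. arr_hyp R P \<and> \<not> same_hyp (b, of_int k) P \<longrightarrow> side P z \<noteq> 0)"
proof -
  let ?W = "(b, of_int k)"
  obtain x y where "x \<noteq> y" "x \<in> closure A \<inter> hyp b (of_int k)" "y \<in> closure A \<inter> hyp b (of_int k)"
    using W is_wall_def by blast
  then have xy: "x \<noteq> y" "x \<in> closure A" "y \<in> closure A" "side ?W x = 0" "side ?W y = 0"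
    by (simp_all add: hyp_def side_def)
  have bz: "b \<noteq> 0" using W root_nonzero[OF R] is_wall_def by blast
  define Others where "Others = {P. arr_hyp R P \<and> \<not> same_hyp ?W P}"
  define Bad where "Bad = (\<Union>P\<in>Others. {u \<in> closed_segment x y. side P u = 0})"
  have "finite R" using R root_system_def by blast
  then have "countable (R \<times> \<int>)"
    by (rule countable_SIGMA[OF countable_finite]) (simp_all add: countable_int)
  then have "countable Others"
    by (rule countable_subset[rotated]) (auto simp: Others_def arr_hyp_def)
  moreover have "finite {u \<in> closed_segment x y. side P u = 0}" if P: "P \<in> Others" for P
  proof (rule finite_segment_hits[OF xy(4,5)])
    show "fst P \<noteq> 0" "\<not> same_hyp ?W P"
      using P root_nonzero[OF R] by (auto simp: Others_def arr_hyp_def)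
  qed (simp add: bz)
  ultimately have "countable Bad" unfolding Bad_def by (rule countable_UN[OF _ countable_finite])
  then have "\<not> closed_segment x y \<subseteq> Bad"
    using uncountable_closed_segment[OF xy(1)] countable_subset by blast
  then obtain z where z: "z \<in> closed_segment x y" "z \<notin> Bad" by blast
  show ?thesis
  proof (intro bexI conjI allI impI)
    have "convex (closure A)" by (rule convex_closure[OF convex_alcove[OF A]])
    then have "closed_segment x y \<subseteq> closure A" using xy(2,3) by (simp add: closed_segment_subset)
    then show "z \<in> closure A" using z(1) by blast
    obtain t where "z = (1 - t) *\<^sub>R x + t *\<^sub>R y" using z(1) unfolding closed_segment_def by blast
    then show "side ?W z = 0" using xy(4,5) side_convex_comb[of ?W] by simp
    fix P assume "arr_hyp R P \<and> \<not> same_hyp ?W P"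
    then have "P \<in> Others" by (simp add: Others_def)
    then show "side P z \<noteq> 0" using z unfolding Bad_def by blast
  qed
qed

lemma separates_refl_wall:
  assumes R: "root_system R" and A: "alcove R A" and W: "is_wall R A b k"
    and a: "a \<in> A" and P: "same_hyp (b, of_int k) P"
  shows "separates P (refl b (of_int k) a) a"
proof -
  have b: "b \<in> R" and bz: "b \<noteq> 0" using W root_nonzero[OF R] is_wall_def by blast+
  have "side (b, of_int k) a \<noteq> 0"
    using side_nonzero_alcove[OF A a] b by (simp add: arr_hyp_def)
  then have "separates (b, of_int k) (refl b (of_int k) a) a"
    using same_side_self unfolding same_side_def separates_def side_refl[OF bz] by simp
  then show ?thesis using separates_same_hyp[OF P] by simp
qed

text \<open>Both \<open>a\<close> and its mirror image lie on the side of \<open>P\<close> containing a generic point of the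
  wall, which the reflection fixes.\<close>

lemma same_side_refl_wall:
  assumes R: "root_system R" and A: "alcove R A" and W: "is_wall R A b k"
    and a: "a \<in> A" and P: "arr_hyp R P" and nP: "\<not> same_hyp (b, of_int k) P"
  shows "same_side P (refl b (of_int k) a) a"
proof -
  let ?s = "refl b (of_int k)" and ?W = "(b, of_int k)"
  have b: "b \<in> R" and bz: "b \<noteq> 0" using W root_nonzero[OF R] is_wall_def by blast+
  have s: "arr_sym R ?s" using arr_sym_refl[OF R b] by simp
  obtain z where z: "z \<in> closure A" "side ?W z = 0"
    and generic: "\<And>P. arr_hyp R P \<Longrightarrow> \<not> same_hyp ?W P \<Longrightarrow> side P z \<noteq> 0"
    using wall_generic_point[OF R A W] by blast
  define Q where "Q = hyp_image ?s P"
  have Q: "arr_hyp R Q" unfolding Q_def by (rule arr_hyp_image[OF s P])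
  have QP: "hyp_image ?s Q = P"
    unfolding Q_def hyp_image_comp[OF s s, symmetric] refl_comp_self[OF bz] hyp_image_id ..
  have nQ: "\<not> same_hyp ?W Q"
  proof
    assume "same_hyp ?W Q"
    then have "same_hyp (hyp_image ?s ?W) P" using same_hyp_hyp_image[OF s] QP by metis
    then show False
      using same_hyp_trans[OF same_hyp_sym[OF same_hyp_hyp_image_refl[OF bz]]] nP by blast
  qed
  have sz: "?s z = z" using refl_fixed_iff[OF bz] z(2) by (simp add: side_def)
  have "same_side Q z a" using same_side_closure_alcove[OF A a Q z(1) generic[OF Q nQ]] .
  then have "same_side P z (?s a)"
    using same_side_hyp_image[OF s, of Q z a] sz QP by simp
  moreover have "same_side P z a" using same_side_closure_alcove[OF A a P z(1) generic[OF P nP]] .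
  ultimately show ?thesis using same_side_trans[OF same_side_sym] by blast
qed

section \<open>Galleries and descents\<close>

definition word_prod :: "('a \<Rightarrow> 'a) list \<Rightarrow> 'a \<Rightarrow> 'a" where
  "word_prod ws = foldr (\<circ>) ws id"

lemma word_prod_Nil [simp]: "word_prod [] = id"
  by (simp add: word_prod_def)

lemma word_prod_Cons [simp]: "word_prod (s # ws) = s \<circ> word_prod ws"
  by (simp add: word_prod_def)

lemma word_prod_append [simp]: "word_prod (xs @ ys) = word_prod xs \<circ> word_prod ys"
  by (induction xs) (simp_all add: o_assoc)

lemma coxeter_length_le: "set ws \<subseteq> S \<Longrightarrow> word_prod ws = w \<Longrightarrow> coxeter_length S w \<le> length ws"
  unfolding coxeter_length_def word_prod_def by (rule Least_le) blast

lemma reduced_word_exists: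
  assumes "set ws \<subseteq> S" "word_prod ws = w"
  shows "\<exists>us. set us \<subseteq> S \<and> word_prod us = w \<and> length us = coxeter_length S w"
proof -
  have "\<exists>n us. length us = n \<and> set us \<subseteq> S \<and> foldr (\<circ>) us id = w"
    using assms unfolding word_prod_def by blast
  then have "\<exists>us. length us = coxeter_length S w \<and> set us \<subseteq> S \<and> foldr (\<circ>) us id = w"
    unfolding coxeter_length_def by (rule LeastI_ex)
  then show ?thesis unfolding word_prod_def by blast
qed

lemma coxeter_length_no_word: "\<nexists>ws. set ws \<subseteq> S \<and> word_prod ws = w \<Longrightarrow> coxeter_length S w = (LEAST n. False)"
  unfolding coxeter_length_def word_prod_def by meson

text \<open>A simple reflection determines its wall only up to the scaling of its equation;
  \<open>wall_eqn\<close> picks one equation.\<close>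

definition wall_eqn :: "pt set \<Rightarrow> pt set \<Rightarrow> (pt \<Rightarrow> pt) \<Rightarrow> pt \<times> real" where
  "wall_eqn R A s = (SOME P. \<exists>b k. is_wall R A b k \<and> P = (b, of_int k) \<and> s = refl b (of_int k))"

lemma wall_eqn_wall:
  assumes "s \<in> simple_refls R A"
  shows "\<exists>b k. is_wall R A b k \<and> wall_eqn R A s = (b, of_int k) \<and> s = refl b (of_int k)"
proof -
  have "\<exists>P b k. is_wall R A b k \<and> P = (b, of_int k) \<and> s = refl b (of_int k)"
    using assms unfolding simple_refls_def by blast
  then show ?thesis unfolding wall_eqn_def by (rule someI_ex)
qed

lemma hrefl_wall_eqn: "s \<in> simple_refls R A \<Longrightarrow> hrefl (wall_eqn R A s) = s"
  using wall_eqn_wall by fastforce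

lemma arr_hyp_wall_eqn: "s \<in> simple_refls R A \<Longrightarrow> arr_hyp R (wall_eqn R A s)"
  using wall_eqn_wall unfolding is_wall_def arr_hyp_def by fastforce

lemma arr_sym_simple_refl:
  assumes R: "root_system R" and "s \<in> simple_refls R A" shows "arr_sym R s"
proof -
  obtain b k where "is_wall R A b k" "s = refl b (of_int k)"
    using assms(2) unfolding simple_refls_def by blast
  then show ?thesis using arr_sym_refl[OF R] by (simp add: is_wall_def)
qed

lemma arr_sym_word_prod:
  assumes R: "root_system R" and "set ws \<subseteq> simple_refls R A"
  shows "arr_sym R (word_prod ws)"
  using assms(2)
proof (induction ws)
  case (Cons s ws)
  then have "arr_sym R (s \<circ> word_prod ws)"
    by (intro arr_sym_comp[OF arr_sym_simple_refl[OF R, of s A]]) simp_all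
  then show ?case by (simp only: word_prod_Cons)
qed (simp add: arr_sym_id)

text \<open>The hyperplane separating the alcoves of \<open>word_prod xs\<close> and \<open>word_prod (xs @ [s])\<close>.\<close>

definition crossed_hyp :: "pt set \<Rightarrow> pt set \<Rightarrow> (pt \<Rightarrow> pt) list \<Rightarrow> (pt \<Rightarrow> pt) \<Rightarrow> pt \<times> real" where
  "crossed_hyp R A xs s = hyp_image (word_prod xs) (wall_eqn R A s)"

locale gallery =
  fixes R A and a :: pt
  assumes R: "root_system R" and A: "alcove R A" and a: "a \<in> A"
begin

abbreviation "S \<equiv> simple_refls R A"

lemma gallery_step:
  assumes xs: "set xs \<subseteq> S" and s: "s \<in> S" and P: "arr_hyp R P"
  shows "same_hyp (crossed_hyp R A xs s) P \<Longrightarrow> separates P (word_prod (xs @ [s]) a) (word_prod xs a)"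
    and "\<not> same_hyp (crossed_hyp R A xs s) P \<Longrightarrow> same_side P (word_prod (xs @ [s]) a) (word_prod xs a)"
proof -
  let ?g = "word_prod xs"
  have g: "arr_sym R ?g" using arr_sym_word_prod[OF R xs] .
  obtain Q where Q: "arr_hyp R Q" "hyp_image ?g Q = P"
    using arr_hyp_preimage[OF g _ P] R root_system_def by blast
  obtain b k where W: "is_wall R A b k" "wall_eqn R A s = (b, of_int k)" "s = refl b (of_int k)"
    using wall_eqn_wall[OF s] by blast
  have c: "crossed_hyp R A xs s = hyp_image ?g (b, of_int k)" by (simp add: crossed_hyp_def W(2))
  have "same_hyp (hyp_image ?g (b, of_int k)) (hyp_image ?g Q) \<longleftrightarrow> same_hyp (b, of_int k) Q"
    by (rule same_hyp_hyp_image_iff[OF g])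
  then have iff: "same_hyp (crossed_hyp R A xs s) P \<longleftrightarrow> same_hyp (b, of_int k) Q"
    by (simp only: c Q(2))
  have e: "word_prod (xs @ [s]) a = ?g (refl b (of_int k) a)" using W(3) by simp
  show "separates P (word_prod (xs @ [s]) a) (word_prod xs a)"
    if "same_hyp (crossed_hyp R A xs s) P"
  proof -
    have "separates Q (refl b (of_int k) a) a"
      using separates_refl_wall[OF R A W(1) a] that iff by blast
    then show ?thesis unfolding e Q(2)[symmetric] separates_hyp_image[OF g] .
  qed
  show "same_side P (word_prod (xs @ [s]) a) (word_prod xs a)"
    if "\<not> same_hyp (crossed_hyp R A xs s) P"
  proof -
    have "same_side Q (refl b (of_int k) a) a"
      using same_side_refl_wall[OF R A W(1) a Q(1)] that iff by blast
    then show ?thesis unfolding e Q(2)[symmetric] same_side_hyp_image[OF g] .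
  qed
qed

lemma same_side_gallery:
  assumes P: "arr_hyp R P"
  shows "set xs \<subseteq> S \<Longrightarrow> (\<forall>ys s zs. xs = ys @ s # zs \<longrightarrow> \<not> same_hyp (crossed_hyp R A ys s) P)
     \<Longrightarrow> same_side P (word_prod xs a) a"
proof (induction xs rule: rev_induct)
  case Nil
  show ?case using same_side_self side_nonzero_alcove[OF A a P] by simp
next
  case (snoc s xs)
  have xs: "set xs \<subseteq> S" and s: "s \<in> S" using snoc.prems(1) by auto
  have "same_side P (word_prod xs a) a"
    using snoc.IH[OF xs] snoc.prems(2) by (metis append.assoc append_Cons)
  moreover have "same_side P (word_prod (xs @ [s]) a) (word_prod xs a)"
    using gallery_step(2)[OF xs s P] snoc.prems(2) by blast
  ultimately show ?case using same_side_trans by blast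
qed

lemma separates_last_crossed_hyp:
  assumes xs: "set xs \<subseteq> S" and s: "s \<in> S"
    and first: "\<forall>ys s' zs. xs = ys @ s' # zs \<longrightarrow> \<not> same_hyp (crossed_hyp R A ys s') (crossed_hyp R A xs s)"
  shows "separates (crossed_hyp R A xs s) (word_prod (xs @ [s]) a) a"
proof -
  let ?P = "crossed_hyp R A xs s"
  have P: "arr_hyp R ?P"
    unfolding crossed_hyp_def by (rule arr_hyp_image[OF arr_sym_word_prod[OF R xs] arr_hyp_wall_eqn[OF s]])
  show ?thesis
    using separates_same_side_trans[OF gallery_step(1)[OF xs s P same_hyp_self]
        same_side_gallery[OF P xs first]] .
qed

end

text \<open>The deletion condition: conjugated by the preceding words, \<open>s\<^sub>1\<close> and \<open>s\<^sub>2\<close> both become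
  the reflection in the common crossed hyperplane, so they cancel.\<close>

lemma word_prod_delete:
  assumes R: "root_system R"
    and S: "set (ys @ s1 # zs @ s2 # us) \<subseteq> simple_refls R A"
    and p: "same_hyp (crossed_hyp R A ys s1) (crossed_hyp R A (ys @ s1 # zs) s2)"
  shows "word_prod (ys @ s1 # zs @ s2 # us) = word_prod (ys @ zs @ us)"
proof -
  have s1: "s1 \<in> simple_refls R A" and s2: "s2 \<in> simple_refls R A" using S by auto
  have g1: "arr_sym R (word_prod ys)" using arr_sym_word_prod[OF R, of ys A] S by simp
  have g2: "arr_sym R (word_prod (ys @ s1 # zs))"
    using arr_sym_word_prod[OF R, of "ys @ s1 # zs" A] S by simp
  have nz: "fst (wall_eqn R A t) \<noteq> 0" if "t \<in> simple_refls R A" for t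
    using arr_hyp_wall_eqn[OF that] root_nonzero[OF R] arr_hyp_def by blast
  let ?r = "hrefl (crossed_hyp R A ys s1)"
  have c1: "word_prod ys \<circ> s1 = ?r \<circ> word_prod ys"
    using hrefl_conj[OF g1 nz[OF s1]] hrefl_wall_eqn[OF s1] by (simp add: crossed_hyp_def)
  have c2: "word_prod (ys @ s1 # zs) \<circ> s2 = ?r \<circ> word_prod (ys @ s1 # zs)"
    using hrefl_conj[OF g2 nz[OF s2]] hrefl_wall_eqn[OF s2] hrefl_same_hyp[OF p]
    by (simp add: crossed_hyp_def)
  have "fst (crossed_hyp R A ys s1) \<noteq> 0"
    using arr_hyp_image[OF g1 arr_hyp_wall_eqn[OF s1]] root_nonzero[OF R]
    by (simp add: crossed_hyp_def arr_hyp_def)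
  then have rr: "?r \<circ> ?r = id" by (rule refl_comp_self)
  have "word_prod (ys @ s1 # zs @ s2 # us) = (word_prod (ys @ s1 # zs) \<circ> s2) \<circ> word_prod us"
    by (simp add: o_assoc)
  also have "\<dots> = ?r \<circ> (word_prod ys \<circ> s1) \<circ> word_prod zs \<circ> word_prod us"
    unfolding c2 by (simp add: o_assoc)
  also have "\<dots> = (?r \<circ> ?r) \<circ> word_prod ys \<circ> word_prod zs \<circ> word_prod us"
    unfolding c1 by (simp add: o_assoc)
  also have "\<dots> = word_prod (ys @ zs @ us)" unfolding rr by (simp add: o_assoc)
  finally show ?thesis .
qed

lemma word_exists_if_length_decreases:
  assumes s: "s \<in> S" and D: "coxeter_length S (w \<circ> s) < coxeter_length S w"
  shows "\<exists>ws. set ws \<subseteq> S \<and> word_prod ws = w \<circ> s"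
proof (rule ccontr)
  assume none: "\<nexists>ws. set ws \<subseteq> S \<and> word_prod ws = w \<circ> s"
  moreover have "\<nexists>ws. set ws \<subseteq> S \<and> word_prod ws = w"
  proof
    assume "\<exists>ws. set ws \<subseteq> S \<and> word_prod ws = w"
    then obtain ws where "set (ws @ [s]) \<subseteq> S" "word_prod (ws @ [s]) = w \<circ> s" using s by auto
    then show False using none by blast
  qed
  ultimately show False using D coxeter_length_no_word[of S] by simp
qed

text \<open>In a reduced word the last hyperplane crossed has not been crossed before: otherwise
  both crossings could be deleted (\<open>word_prod_delete\<close>), giving a shorter word.\<close>

lemma reduced_word_last_crossed_hyp_new:
  assumes R: "root_system R" and S: "set (us @ [s]) \<subseteq> simple_refls R A"
    and reduced: "length us < coxeter_length (simple_refls R A) (word_prod (us @ [s]))"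
  shows "\<forall>ys s' zs. us = ys @ s' # zs \<longrightarrow> \<not> same_hyp (crossed_hyp R A ys s') (crossed_hyp R A us s)"
proof (intro allI impI notI)
  fix ys s' zs assume u: "us = ys @ s' # zs"
    and p: "same_hyp (crossed_hyp R A ys s') (crossed_hyp R A us s)"
  have "word_prod (ys @ s' # zs @ [s]) = word_prod (ys @ zs @ [])"
    by (rule word_prod_delete[OF R]) (use S u p in simp_all)
  then have "coxeter_length (simple_refls R A) (word_prod (us @ [s])) \<le> length (ys @ zs)"
    using coxeter_length_le[of "ys @ zs"] S u by simp
  then show False using reduced u by simp
qed

lemma same_hyp_last_crossed_hyp:
  assumes R: "root_system R" and W: "is_wall R A b k" and us: "set us \<subseteq> simple_refls R A"
  shows "same_hyp (crossed_hyp R A us (refl b (of_int k)))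
    (hyp_image (word_prod (us @ [refl b (of_int k)])) (b, of_int k))"
proof -
  let ?s = "refl b (of_int k)"
  have s: "?s \<in> simple_refls R A" using W unfolding simple_refls_def by blast
  have bR: "b \<in> R" and bz: "b \<noteq> 0" using W root_nonzero[OF R] is_wall_def by blast+
  have "fst (wall_eqn R A ?s) \<noteq> 0"
    using arr_hyp_wall_eqn[OF s] root_nonzero[OF R] by (simp add: arr_hyp_def)
  then have "same_hyp (wall_eqn R A ?s) (b, of_int k)"
    using same_hyp_if_hrefl_eq bz hrefl_wall_eqn[OF s] by simp
  then have "same_hyp (wall_eqn R A ?s) (hyp_image ?s (b, of_int k))"
    using same_hyp_trans[OF _ same_hyp_sym[OF same_hyp_hyp_image_refl[OF bz]]] by blast
  then have "same_hyp (crossed_hyp R A us ?s) (hyp_image (word_prod us) (hyp_image ?s (b, of_int k)))"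
    unfolding crossed_hyp_def by (rule same_hyp_hyp_image[OF arr_sym_word_prod[OF R us]])
  also have "hyp_image (word_prod us) (hyp_image ?s (b, of_int k))
      = hyp_image (word_prod (us @ [?s])) (b, of_int k)"
    using arr_sym_word_prod[OF R us] arr_sym_refl[OF R bR] by (simp add: hyp_image_comp)
  finally show ?thesis .
qed

lemma descent_separates:
  assumes R: "root_system R" and A: "alcove R A" and a: "a \<in> A" and W: "is_wall R A b k"
    and D: "coxeter_length (simple_refls R A) (w \<circ> refl b (of_int k))
      < coxeter_length (simple_refls R A) w"
  shows "separates (hyp_image w (b, of_int k)) (w a) a"
proof -
  interpret gallery R A a using R A a by unfold_locales
  let ?s = "refl b (of_int k)"
  have s: "?s \<in> S" using W unfolding simple_refls_def by blast
  have bz: "b \<noteq> 0" using W root_nonzero[OF R] is_wall_def by blast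
  obtain us where us: "set us \<subseteq> S" "word_prod us = w \<circ> ?s" "length us = coxeter_length S (w \<circ> ?s)"
    using word_exists_if_length_decreases[OF s D] reduced_word_exists by blast
  have w: "word_prod (us @ [?s]) = w"
    using us(2) refl_comp_self[OF bz] by (simp add: o_assoc[symmetric])
  have uss: "set (us @ [?s]) \<subseteq> S" using us(1) s by simp
  have "separates (crossed_hyp R A us ?s) (w a) a"
    using separates_last_crossed_hyp[OF us(1) s reduced_word_last_crossed_hyp_new[OF R uss]] D us(3)
    unfolding w by simp
  then show ?thesis
    using separates_same_hyp same_hyp_last_crossed_hyp[OF R W us(1)] unfolding w by blast
qed

lemma separates_if_right_descent:
  assumes R: "root_system R" and A: "alcove R A" and a: "a \<in> A" and W: "is_wall R A \<beta> k"
    and w: "arr_sym R w" and b: "w b = a"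
    and D: "refl \<beta> (of_int k) \<in> right_descents (simple_refls R A) w"
  shows "separates (\<beta>, of_int k) a b"
proof -
  have "coxeter_length (simple_refls R A) (w \<circ> refl \<beta> (of_int k)) < coxeter_length (simple_refls R A) w"
    using D unfolding right_descents_def by blast
  then have "separates (hyp_image w (\<beta>, of_int k)) (w a) (w b)"
    using descent_separates[OF R A a W] b by simp
  then show ?thesis using separates_hyp_image[OF w] by blast
qed

section \<open>Products of two reflections of order four\<close>

lemma funpow_diff:
  fixes f L :: "'a::ab_group_add \<Rightarrow> 'a"
  assumes "\<And>x y. f x - f y = L (x - y)"
  shows "(f ^^ n) x - (f ^^ n) y = (L ^^ n) (x - y)"
proof (induction n)
  case (Suc n)
  have "(f ^^ Suc n) x - (f ^^ Suc n) y = L ((f ^^ n) x - (f ^^ n) y)" by (simp add: assms)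
  then show ?case by (simp add: Suc.IH)
qed simp

lemma funpow2_eq_id_if_translation:
  fixes f :: "'a::real_vector \<Rightarrow> 'a"
  assumes transl: "\<And>x y. (f ^^ 2) x - (f ^^ 2) y = x - y" and four: "f ^^ 4 = id"
  shows "f ^^ 2 = id"
proof
  fix x
  let ?g = "f ^^ 2"
  have g: "?g x = x + ?g 0" for x using transl[of x 0] by (simp add: algebra_simps)
  have "f ^^ 4 = ?g \<circ> ?g" by (simp flip: funpow_add)
  then have "?g (?g 0) = 0" using four by (metis comp_apply id_apply)
  then have "2 *\<^sub>R ?g 0 = 0" using g[of "?g 0"] by (simp add: scaleR_2)
  then have "?g 0 = 0" by simp
  then show "?g x = id x" using g[of x] by simp
qed

lemma refl_comb_left:
  assumes "a \<noteq> 0"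
  shows "refl a 0 (x *\<^sub>R a + y *\<^sub>R b) = (- x - y * (2 * inner a b / inner a a)) *\<^sub>R a + y *\<^sub>R b"
proof -
  define c where "c = 2 * inner (x *\<^sub>R a + y *\<^sub>R b) a / inner a a"
  have "- x - y * (2 * inner a b / inner a a) = x - c"
    using assms unfolding c_def by (simp add: inner_add_left inner_commute[of b a] field_simps)
  then show ?thesis
    unfolding refl_def diff_zero c_def[symmetric] by (simp only:) (simp add: scaleR_diff_left)
qed

lemma refl_comb_right:
  assumes "b \<noteq> 0"
  shows "refl b 0 (x *\<^sub>R a + y *\<^sub>R b) = x *\<^sub>R a + (- y - x * (2 * inner a b / inner b b)) *\<^sub>R b"
proof -
  define c where "c = 2 * inner (x *\<^sub>R a + y *\<^sub>R b) b / inner b b"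
  have "- y - x * (2 * inner a b / inner b b) = y - c"
    using assms unfolding c_def by (simp add: inner_add_left field_simps)
  then show ?thesis
    unfolding refl_def diff_zero c_def[symmetric] by (simp only:) (simp add: scaleR_diff_left)
qed

lemma scaleR_comb:
  fixes a b :: "'a::real_vector"
  shows "t *\<^sub>R (p *\<^sub>R a + q *\<^sub>R b) - (r *\<^sub>R a + s *\<^sub>R b) = (t * p - r) *\<^sub>R a + (t * q - s) *\<^sub>R b"
  by (simp add: scaleR_diff_left scaleR_add_right)

text \<open>Cayley--Hamilton for the rotation \<open>refl a 0 \<circ> refl b 0\<close>: its determinant is \<open>1\<close> and its
  trace is \<open>4 cos\<^sup>2 \<theta> - 2\<close>, \<open>\<theta>\<close> the angle between \<open>a\<close> and \<open>b\<close>.\<close>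

lemma refl_comp_refl_quadratic:
  assumes "det2 a b \<noteq> 0"
  shows "refl a 0 (refl b 0 (refl a 0 (refl b 0 x))) =
    (4 * (inner a b)^2 / (inner a a * inner b b) - 2) *\<^sub>R refl a 0 (refl b 0 x) - x"
proof -
  have a: "a \<noteq> 0" and b: "b \<noteq> 0" using det2_nonzero_imp_nonzero[OF assms] by auto
  define u where "u = 2 * inner a b / inner a a"
  define v where "v = 2 * inner a b / inner b b"
  have L: "refl a 0 (refl b 0 (p *\<^sub>R a + q *\<^sub>R b)) = (- p + q * u + p * u * v) *\<^sub>R a + (- q - p * v) *\<^sub>R b"
    for p q
    unfolding refl_comb_left[OF a] refl_comb_right[OF b] u_def[symmetric] v_def[symmetric]
    by (simp add: algebra_simps)
  define t where "t = u * v - 2"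
  have t: "4 * (inner a b)^2 / (inner a a * inner b b) - 2 = t"
    unfolding t_def u_def v_def by (simp add: power2_eq_square)
  obtain x1 x2 where x: "x = x1 *\<^sub>R a + x2 *\<^sub>R b" using decompose_det2[OF assms] by blast
  have "refl a 0 (refl b 0 (refl a 0 (refl b 0 x)))
      = (- (- x1 + x2 * u + x1 * u * v) + (- x2 - x1 * v) * u + (- x1 + x2 * u + x1 * u * v) * u * v) *\<^sub>R a
        + (- (- x2 - x1 * v) - (- x1 + x2 * u + x1 * u * v) * v) *\<^sub>R b"
    unfolding x L ..
  also have "\<dots> = (t * (- x1 + x2 * u + x1 * u * v) - x1) *\<^sub>R a + (t * (- x2 - x1 * v) - x2) *\<^sub>R b"
    by (rule arg_cong2[where f = "\<lambda>p q. p *\<^sub>R a + q *\<^sub>R b"]) (simp_all add: t_def algebra_simps)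
  also have "\<dots> = t *\<^sub>R refl a 0 (refl b 0 x) - x"
    unfolding x L scaleR_comb ..
  finally show ?thesis unfolding t .
qed

lemma order_four_quadratic_trace_zero:
  fixes L :: "'a::real_vector \<Rightarrow> 'a"
  assumes inj: "\<And>u v. L u = L v \<Longrightarrow> u = v" and four: "\<And>v. L (L (L (L v))) = v"
    and two: "\<exists>v. L (L v) \<noteq> v" and quad: "\<And>v. L (L v) = t *\<^sub>R L v - v"
  shows "t = 0"
proof (rule ccontr)
  assume t: "t \<noteq> 0"
  have "L (L v) = v" for v
  proof -
    let ?u = "L (L v)"
    have "v = t *\<^sub>R L ?u - ?u" using four[of v] quad[of ?u] by simp
    moreover have "v + ?u = t *\<^sub>R L v" using quad[of v] by simp
    ultimately have "L ?u = L v" using t by (simp add: algebra_simps)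
    then show ?thesis by (rule inj)
  qed
  then show False using two by blast
qed

text \<open>If \<open>f = s\<^sub>a \<circ> s\<^sub>b\<close> has order four, its linear part \<open>L\<close> satisfies \<open>L\<^sup>4 = 1 \<noteq> L\<^sup>2\<close>
  (otherwise \<open>f\<^sup>2\<close> would be a translation of finite order); with \<open>L\<^sup>2 = t L - 1\<close> this forces
  \<open>t = 0\<close>, i.e.\ the angle between \<open>a\<close> and \<open>b\<close> is \<open>\<pi>/4\<close> or \<open>3\<pi>/4\<close>.\<close>

lemma refl_comp_order_four_angle:
  assumes a: "a \<noteq> 0" and b: "b \<noteq> 0"
    and four: "(refl a k \<circ> refl b m) ^^ 4 = id" and two: "(refl a k \<circ> refl b m) ^^ 2 \<noteq> id"
  shows "2 * (inner a b)^2 = inner a a * inner b b"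
proof -
  let ?f = "refl a k \<circ> refl b m" and ?L = "\<lambda>v. refl a 0 (refl b 0 v)"
  have f_diff: "?f x - ?f y = ?L (x - y)" for x y by (simp add: refl_diff)
  have "(?L ^^ 4) v = v" for v
    using funpow_diff[of ?f ?L, OF f_diff, of 4 v 0] unfolding four by simp
  then have L4: "?L (?L (?L (?L v))) = v" for v by (simp add: eval_nat_numeral)
  have L2: "\<exists>v. ?L (?L v) \<noteq> v"
  proof (rule ccontr)
    assume "\<nexists>v. ?L (?L v) \<noteq> v"
    then have "(?f ^^ 2) x - (?f ^^ 2) y = x - y" for x y
      using funpow_diff[of ?f ?L, OF f_diff, of 2 x y] by (simp add: eval_nat_numeral)
    then show False using funpow2_eq_id_if_translation four two by blast
  qed
  have det: "det2 a b \<noteq> 0"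
  proof
    assume "det2 a b = 0"
    then obtain l where l: "b = l *\<^sub>R a" using det2_eq_0_imp_multiple a by blast
    then have "l \<noteq> 0" using b by auto
    then have "refl b 0 = refl a 0" using refl_scale[of l a 0] l by simp
    then show False using L2 refl_refl[OF a] by simp
  qed
  have L_inj: "u = v" if "?L u = ?L v" for u v
  proof -
    have "refl b 0 (refl a 0 (?L u)) = refl b 0 (refl a 0 (?L v))" using that by simp
    then show ?thesis by (simp add: refl_refl a b)
  qed
  have "4 * (inner a b)^2 / (inner a a * inner b b) - 2 = 0"
    by (rule order_four_quadratic_trace_zero[OF L_inj L4 L2 refl_comp_refl_quadratic[OF det]])
  then show ?thesis using a b by (simp add: field_simps)
qed

section \<open>Special vertices\<close>

lemma gram_identity2:
  "inner (a::pt) a * inner b b * inner g g - inner a a * (inner b g)^2 - (inner a b)^2 * inner g g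
   + 2 * inner a b * inner a g * inner b g - inner b b * (inner a g)^2 = 0"
  by (simp add: inner_pt power2_eq_square algebra_simps)

lemma cartan_product_int:
  assumes R: "root_system R" and a: "a \<in> R" and g: "g \<in> R"
  shows "\<exists>n::int. 0 \<le> n \<and> n \<le> 4 \<and> 4 * (inner a g)^2 = of_int n * (inner a a * inner g g)"
proof -
  let ?A = "inner a a" and ?G = "inner g g" and ?X = "inner a g"
  have Az: "?A \<noteq> 0" and Gz: "?G \<noteq> 0" using root_nonzero[OF R a] root_nonzero[OF R g] by simp_all
  have AG: "?A * ?G > 0" using root_nonzero[OF R a] root_nonzero[OF R g] by simp
  have "2 * ?X / ?A \<in> \<int>" "2 * inner g a / ?G \<in> \<int>"
    using R a g unfolding root_system_def by blast+
  then obtain n where n: "(2 * ?X / ?A) * (2 * ?X / ?G) = of_int n"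
    by (metis Ints_cases Ints_mult inner_commute)
  have "4 * ?X^2 = (2 * ?X / ?A) * (2 * ?X / ?G) * (?A * ?G)"
    using Az Gz by (simp add: field_simps power2_eq_square)
  then have e: "4 * ?X^2 = of_int n * (?A * ?G)" unfolding n .
  have "?X^2 \<le> ?A * ?G" using lagrange_identity2[of a g] by (metis diff_ge_0_iff_ge zero_le_power2)
  then have "of_int n * (?A * ?G) \<le> 4 * (?A * ?G)" and "0 \<le> of_int n * (?A * ?G)"
    by (simp_all add: e[symmetric])
  then have "of_int n \<le> (4::real)" "0 \<le> (of_int n :: real)"
    using AG by (simp_all add: mult_le_cancel_right zero_le_mult_iff)
  then show ?thesis using e by (intro exI[of _ n]) simp
qed

lemma B2_integer_solutions:
  fixes n1 n2 :: int
  assumes "0 \<le> n1" "n1 \<le> 4" "0 \<le> n2" "n2 \<le> 4" "(n1 + n2 - 2)^2 = 2 * n1 * n2"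
  shows "n1 = 0 \<or> n1 = 4 \<or> n2 = 0 \<or> n2 = 4"
proof -
  have "n1 \<in> {0..4}" "n2 \<in> {0..4}" using assms(1-4) by simp_all
  moreover have "{0..4::int} = {0, 1, 2, 3, 4}" by auto
  ultimately show ?thesis using assms(5) by (auto simp: power2_eq_square)
qed

text \<open>Roots at angle \<open>\<pi>/4\<close> generate a root system of type \<open>B\<^sub>2\<close>, whose roots lie at the multiples
  of \<open>\<pi>/4\<close>: each root is parallel or orthogonal to one of them.  The proof compares the squared
  cosines \<open>n\<^sub>1/4\<close>, \<open>n\<^sub>2/4\<close> of the angles between \<open>g\<close> and \<open>a\<close>, \<open>b\<close> through the Gram determinant.\<close>

lemma root_position_B2:
  assumes R: "root_system R" and a: "a \<in> R" and b: "b \<in> R" and g: "g \<in> R"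
    and angle: "2 * (inner a b)^2 = inner a a * inner b b"
  shows "inner a g = 0 \<or> det2 a g = 0 \<or> inner b g = 0 \<or> det2 b g = 0"
proof -
  let ?A = "inner a a" and ?B = "inner b b" and ?G = "inner g g"
  let ?C = "inner a b" and ?X = "inner a g" and ?Y = "inner b g"
  obtain n1 where n1: "0 \<le> n1" "n1 \<le> 4" "4 * ?X^2 = of_int n1 * (?A * ?G)"
    using cartan_product_int[OF R a g] by blast
  obtain n2 where n2: "0 \<le> n2" "n2 \<le> 4" "4 * ?Y^2 = of_int n2 * (?B * ?G)"
    using cartan_product_int[OF R b g] by blast
  have ABG: "?A * ?B * ?G \<noteq> 0"
    using root_nonzero[OF R a] root_nonzero[OF R b] root_nonzero[OF R g] by simp
  have "4 * ?A * ?B * ?G - ?A * (4 * ?Y^2) - (4 * ?C^2) * ?G + 8 * ?C * ?X * ?Y - ?B * (4 * ?X^2) = 0"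
    using gram_identity2[of a b g] by algebra
  moreover have C4: "4 * ?C^2 = 2 * (?A * ?B)" using angle by simp
  ultimately have E: "8 * ?C * ?X * ?Y = of_int (n1 + n2 - 2) * (?A * ?B * ?G)"
    unfolding n1(3) n2(3) by (simp add: algebra_simps)
  have "(of_int (n1 + n2 - 2) * (?A * ?B * ?G))^2 = (8 * ?C * ?X * ?Y)^2"
    by (simp only: E)
  also have "\<dots> = 4 * ?C^2 * (4 * ?X^2) * (4 * ?Y^2)" by algebra
  also have "\<dots> = of_int (2 * n1 * n2) * (?A * ?B * ?G)^2"
    unfolding C4 n1(3) n2(3) by (simp add: algebra_simps power2_eq_square)
  finally have "of_int ((n1 + n2 - 2)^2) = (of_int (2 * n1 * n2) :: real)"
    using ABG by (simp add: power_mult_distrib)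
  then have "n1 = 0 \<or> n1 = 4 \<or> n2 = 0 \<or> n2 = 4"
    using B2_integer_solutions n1(1,2) n2(1,2) of_int_eq_iff by blast
  moreover have "?X^2 = ?A * ?G \<Longrightarrow> det2 a g = 0" "?Y^2 = ?B * ?G \<Longrightarrow> det2 b g = 0"
    using lagrange_identity2[of a g] lagrange_identity2[of b g] by simp_all
  ultimately show ?thesis
    using n1(3) n2(3) root_nonzero[OF R a] root_nonzero[OF R b] root_nonzero[OF R g] by auto
qed

lemma inner_refl_eq_0_if_angle:
  assumes "b \<noteq> 0" "2 * (inner a b)^2 = inner a a * inner b b"
  shows "inner a (refl b 0 a) = 0"
  using assms by (simp add: refl_def inner_diff_right power2_eq_square field_simps inner_commute)

lemma special_vertex_B2:
  assumes R: "root_system R" and a: "a \<in> R" and b: "b \<in> R"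
    and angle: "2 * (inner a b)^2 = inner a a * inner b b"
    and pa: "inner p a \<in> \<int>" and pb: "inner p b = 0" and g: "g \<in> R"
  shows "inner p g \<in> \<int>"
proof -
  have az: "a \<noteq> 0" and bz: "b \<noteq> 0" using root_nonzero[OF R] a b by blast+
  have pm: "inner p g \<in> \<int>" if "g = d \<or> g = - d" "inner p d \<in> \<int>" for d
    using that by (auto simp: inner_minus_right)
  have pm_orth: "inner p g \<in> \<int>"
    if "c \<noteq> 0" "inner c g = 0" "d \<in> R" "inner c d = 0" "inner p d \<in> \<int>" for c d
    using pm[OF roots_orthogonal_to_same[OF R g that(3,1)]] that(2,4,5) by (simp add: inner_commute)
  have inner_p_refl: "inner p (refl c 0 x) = inner p x - (2 * inner x c / inner c c) * inner p c" for c x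
    by (simp add: refl_def inner_diff_right)
  have rR: "refl b 0 a \<in> R" "refl a 0 b \<in> R" using R a b unfolding root_system_def by blast+
  from root_position_B2[OF R a b g angle] consider
    "det2 a g = 0" | "det2 b g = 0" | "inner a g = 0" | "inner b g = 0" by blast
  then show ?thesis
  proof cases
    case 1
    then obtain l where "g = l *\<^sub>R a" using det2_eq_0_imp_multiple az by blast
    moreover from this have "l = 1 \<or> l = -1" by (rule roots_parallel[OF R a g])
    ultimately show ?thesis using pm pa by auto
  next
    case 2
    then obtain l where "g = l *\<^sub>R b" using det2_eq_0_imp_multiple bz by blast
    then show ?thesis using pb by simp
  next
    case 3
    show ?thesis
      using pm_orth[OF az 3 rR(1) inner_refl_eq_0_if_angle[OF bz angle]] pa pb inner_p_refl by simp
  next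
    case 4
    have "2 * (inner b a)^2 = inner b b * inner a a" using angle by (simp add: inner_commute)
    moreover have "2 * inner a b / inner a a \<in> \<int>" using R a b unfolding root_system_def by blast
    then have "(2 * inner b a / inner a a) * inner p a \<in> \<int>"
      using pa unfolding inner_commute[of b a] by (rule Ints_mult)
    ultimately show ?thesis
      using pm_orth[OF bz 4 rR(2) inner_refl_eq_0_if_angle[OF az]] pb inner_p_refl[of a b] by simp
  qed
qed

section \<open>Separation at a vertex\<close>

lemma wall_point_off_vertex:
  assumes W: "is_wall R A a ka" and dn: "det2 a b \<noteq> 0"
    and pa: "inner p a = of_int ka" and pb: "inner p b = kb"
  shows "\<exists>z\<in>closure A. side (a, of_int ka) z = 0 \<and> side (b, kb) z \<noteq> 0"
proof -
  obtain x y where xy: "x \<noteq> y" "x \<in> closure A \<inter> hyp a (of_int ka)" "y \<in> closure A \<inter> hyp a (of_int ka)"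
    using W is_wall_def by blast
  have vertex: "z = p" if "z \<in> hyp a (of_int ka)" "side (b, kb) z = 0" for z
  proof -
    have "inner (z - p) a = 0" "inner (z - p) b = 0"
      using that pa pb by (simp_all add: hyp_def side_def inner_diff_left)
    then have "z - p = 0" by (rule orthogonal_to_basis_imp_zero[OF dn])
    then show ?thesis by simp
  qed
  have "x \<noteq> p \<or> y \<noteq> p" using xy(1) by blast
  then show ?thesis using xy vertex by (auto simp: hyp_def side_def)
qed

lemma nonneg_comb_neg:
  fixes \<mu> \<nu> :: real
  assumes "0 \<le> \<mu>" "0 \<le> \<nu>" "\<mu> * u + \<nu> * v > 0" "u' < 0" "v' < 0"
  shows "\<mu> * u' + \<nu> * v' < 0"
proof (cases "\<mu> = 0")
  case True
  then have "\<nu> > 0" using assms(2,3) by (cases "\<nu> = 0") simp_all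
  then show ?thesis using True assms(5) by (simp add: mult_pos_neg)
next
  case False
  then have "\<mu> * u' < 0" using assms(1,4) by (simp add: mult_pos_neg)
  moreover have "\<nu> * v' \<le> 0" using assms(2,5) by (simp add: mult_nonneg_nonpos)
  ultimately show ?thesis by simp
qed

lemma side_through_vertex:
  assumes dn: "det2 a b \<noteq> 0" and pa: "inner p a = ka" and pb: "inner p b = kb"
  shows "side (d, inner p d) z
    = (det2 d b / det2 a b) * side (a, ka) z + (det2 a d / det2 a b) * side (b, kb) z"
proof -
  have through_p: "side (c, inner p c) z = inner (z - p) c" for c
    by (simp add: side_def inner_diff_left)
  have "inner (z - p) d = (det2 d b / det2 a b) * inner (z - p) a + (det2 a d / det2 a b) * inner (z - p) b"
    by (subst decompose_det2[OF dn, of d]) (simp add: inner_add_right)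
  then show ?thesis using through_p[of d] through_p[of a] through_p[of b] pa pb by simp
qed

lemma wall_coefficient_nonneg:
  assumes A: "alcove R A" and x: "x \<in> A" and Q: "arr_hyp R (b, kb)" and P: "arr_hyp R P"
    and W: "is_wall R A a ka" and dn: "det2 a b \<noteq> 0"
    and pa: "inner p a = of_int ka" and pb: "inner p b = kb"
    and comb: "\<And>z. side P z * side P x
      = \<mu> * (side (a, of_int ka) z * side (a, of_int ka) x) + \<nu> * (side (b, kb) z * side (b, kb) x)"
  shows "\<nu> \<ge> 0"
proof -
  obtain z where z: "z \<in> closure A" "side (a, of_int ka) z = 0" "side (b, kb) z \<noteq> 0"
    using wall_point_off_vertex[OF W dn pa pb] by blast
  have "side (b, kb) z * side (b, kb) x > 0"
    using side_closure_alcove[OF A x Q z(1)] z(3) side_nonzero_alcove[OF A x Q]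
    by (simp add: order_le_less)
  moreover have "\<nu> * (side (b, kb) z * side (b, kb) x) \<ge> 0"
    using side_closure_alcove[OF A x P z(1)] comb[of z] z(2) by simp
  ultimately show ?thesis by (simp add: zero_le_mult_iff)
qed

text \<open>Near the vertex \<open>p\<close> the alcove is the cone cut out by its two walls through \<open>p\<close>.  A
  hyperplane of the arrangement through \<open>p\<close> does not enter the alcove, so its equation is a
  nonnegative combination of the (suitably signed) wall equations; hence it separates \<open>x\<close> from
  every point lying beyond both walls.\<close>

lemma separates_at_vertex:
  assumes R: "root_system R" and A: "alcove R A" and x: "x \<in> A"
    and Wa: "is_wall R A a ka" and Wb: "is_wall R A b kb" and dn: "det2 a b \<noteq> 0"
    and pa: "inner p a = of_int ka" and pb: "inner p b = of_int kb"
    and d: "d \<in> R" and dI: "inner p d \<in> \<int>"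
    and sa: "separates (a, of_int ka) x y" and sb: "separates (b, of_int kb) x y"
  shows "separates (d, inner p d) x y"
proof -
  let ?Pa = "(a, of_int ka)" and ?Pb = "(b, of_int kb)" and ?Pd = "(d, inner p d)"
  have Pa: "arr_hyp R ?Pa" and Pb: "arr_hyp R ?Pb" and Pd: "arr_hyp R ?Pd"
    using Wa Wb d dI by (auto simp: is_wall_def arr_hyp_def)
  define F where "F = side ?Pa x"
  define T where "T = side ?Pb x"
  define G where "G = side ?Pd x"
  have F: "F \<noteq> 0" and T: "T \<noteq> 0" and G: "G \<noteq> 0"
    unfolding F_def T_def G_def using side_nonzero_alcove[OF A x] Pa Pb Pd by blast+
  define \<mu> where "\<mu> = G * (det2 d b / det2 a b) / F"
  define \<nu> where "\<nu> = G * (det2 a d / det2 a b) / T"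
  have comb: "side ?Pd z * G = \<mu> * (side ?Pa z * F) + \<nu> * (side ?Pb z * T)" for z
    unfolding \<mu>_def \<nu>_def side_through_vertex[OF dn pa pb] using F T by (simp add: field_simps)
  have "\<mu> \<ge> 0"
  proof (rule wall_coefficient_nonneg[OF A x Pa Pd Wb det2_commute_nonzero[OF dn] pb pa, where \<mu> = \<nu>])
    show "side ?Pd z * side ?Pd x = \<nu> * (side ?Pb z * side ?Pb x) + \<mu> * (side ?Pa z * side ?Pa x)" for z
      using comb[of z] unfolding F_def T_def G_def by linarith
  qed
  moreover have "\<nu> \<ge> 0"
  proof (rule wall_coefficient_nonneg[OF A x Pb Pd Wa dn pa pb, where \<mu> = \<mu>])
    show "side ?Pd z * side ?Pd x = \<mu> * (side ?Pa z * side ?Pa x) + \<nu> * (side ?Pb z * side ?Pb x)" for z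
      using comb[of z] unfolding F_def T_def G_def .
  qed
  moreover have "\<mu> * (side ?Pa x * F) + \<nu> * (side ?Pb x * T) > 0"
    using comb[of x] same_side_self[of ?Pd x] G unfolding same_side_def G_def by simp
  moreover have "side ?Pa y * F < 0" "side ?Pb y * T < 0"
    using sa sb unfolding F_def T_def separates_def by (simp_all add: mult.commute)
  ultimately have "side ?Pd y * G < 0" unfolding comb by (rule nonneg_comb_neg)
  then show ?thesis unfolding separates_def G_def by (simp add: mult.commute)
qed

theorem lemma4p42:
  fixes R A0 :: "(real^2) set" and w :: "real^2 \<Rightarrow> real^2"
    and \<alpha> \<beta>0 \<beta>i :: "real^2" and c k0 :: int
  assumes "root_system R" and "irreducible_rs R"
    and "alcove R A0" and "0 \<in> closure A0"
    and "is_wall R A0 \<beta>0 k0" and "k0 \<noteq> 0"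
    and "is_wall R A0 \<beta>i 0"
    and "w \<in> affW R"
    and "\<alpha> \<in> R"
    and "A0 \<subseteq> {v. of_int c < inner v \<alpha> \<and> inner v \<alpha> < of_int c + 1}"
    and "w ` A0 \<subseteq> {v. of_int c < inner v \<alpha> \<and> inner v \<alpha> < of_int c + 1}"
    and "right_descents (simple_refls R A0) w = {refl \<beta>0 (of_int k0), refl \<beta>i 0}"
  shows "\<not> ((refl \<beta>0 (of_int k0) \<circ> refl \<beta>i 0) ^^ 4 = id \<and>
            (\<forall>n. 0 < n \<and> n < 4 \<longrightarrow> (refl \<beta>0 (of_int k0) \<circ> refl \<beta>i 0) ^^ n \<noteq> id))"
proof
  assume order: "(refl \<beta>0 (of_int k0) \<circ> refl \<beta>i 0) ^^ 4 = id \<and>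
            (\<forall>n. 0 < n \<and> n < 4 \<longrightarrow> (refl \<beta>0 (of_int k0) \<circ> refl \<beta>i 0) ^^ n \<noteq> id)"
  note R = assms(1) and A = assms(3) and W0 = assms(5) and Wi = assms(7)
  have \<beta>0: "\<beta>0 \<in> R" "\<beta>0 \<noteq> 0" and \<beta>i: "\<beta>i \<in> R" "\<beta>i \<noteq> 0"
    using W0 Wi root_nonzero[OF R] is_wall_def by blast+
  obtain a where a: "a \<in> A0" using alcove_nonempty[OF A] by blast
  have w: "arr_sym R w" using arr_sym_affW[OF R assms(8)] .
  obtain b where b: "w b = a" using surjD[OF arr_sym_surj[OF w], of a] by blast
  have sep0: "separates (\<beta>0, of_int k0) a b"
    using separates_if_right_descent[OF R A a W0 w b] assms(12) by simp
  have sepi: "separates (\<beta>i, of_int 0) a b"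
    using separates_if_right_descent[OF R A a Wi w b] assms(12) by simp
  have "(refl \<beta>0 (of_int k0) \<circ> refl \<beta>i 0) ^^ 2 \<noteq> id" using spec[OF conjunct2[OF order], of 2] by simp
  then have angle: "2 * (inner \<beta>0 \<beta>i)^2 = inner \<beta>0 \<beta>0 * inner \<beta>i \<beta>i"
    by (rule refl_comp_order_four_angle[OF \<beta>0(2) \<beta>i(2) conjunct1[OF order]])
  have dn: "det2 \<beta>0 \<beta>i \<noteq> 0" by (rule det2_nonzero_if_angle[OF \<beta>0(2) \<beta>i(2) angle])
  obtain p where p: "inner p \<beta>0 = of_int k0" "inner p \<beta>i = of_int 0"
    using hyperplanes_meet[OF dn] by blast
  obtain d where d: "d \<in> R" "w d - w 0 = \<alpha>"
    using arr_sym_roots_surj[OF w _ assms(9)] R root_system_def by blast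
  have dI: "inner p d \<in> \<int>" using special_vertex_B2[OF R \<beta>0(1) \<beta>i(1) angle _ _ d(1)] p by simp
  have "separates (d, inner p d) a b" by (rule separates_at_vertex[OF R A a W0 Wi dn p d(1) dI sep0 sepi])
  moreover have "\<not> separates (d, inner p d) a b"
    by (rule not_separates_strip_preimage[OF w _ _ b]) (use d dI a assms(10,11) in \<open>auto simp: arr_hyp_def\<close>)
  ultimately show False by contradiction
qed

end
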